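(* Let $\theta\mapsto K_m(\theta)\in\mathbb{C}^{D\times D}$, $m=0,\dots,d-1$, be differentiable Kraus operators with $\sum_mK_m^\dagger K_m=\mathbb{1}$, and suppose the channel $\mathcal{E}(X)=\sum_mK_mXK_m^\dagger$ (at the fixed parameter value $\theta$) is irreducible in the sense that it has a unique fixed point $\rho_{ss}$ and all its other eigenvalues have modulus strictly less than $1$. Let $\langle F_{SE}\rangle(t)=\mathbb{E}_{\psi\sim\text{Haar}}F_{SE}(t;\psi)$ be the Haar-averaged quantum Fisher information of the joint system–emission state $\sum_{\mathbf{m}}K_{m_t}\cdots K_{m_1}|\psi\rangle\otimes|m_1\cdots m_t\rangle$, and let $F_E(t)$ be the quantum Fisher information of the $t$-site emission TI-MPS $|\Phi_t\rangle$ (defined in the context). Then $\langle F_{SE}\rangle(t)$ and $F_E(t)$ have the same asymptotic scaling: $\lim_{t\to\infty}\langle F_{SE}\rangle(t)/t$ and $\lim_{t\to\infty}F_E(t)/t$ exist, are finite, and are equal.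
   Context: $|\Phi_t(\theta)\rangle=\sum_{\mathbf{m}}(\mathbb{1}_A\otimes K_{m_t}(\theta)\cdots K_{m_1}(\theta))|\xi\rangle\otimes|m_1\cdots m_t\rangle$, where $|\xi\rangle\in\mathbb{C}^D_A\otimes\mathbb{C}^D_S$ is a fixed $\theta$-independent purification of $\rho_{ss}$; this is the $t$-site translation-invariant MPS with bond tensor $V=\sum_mK_m\otimes|m\rangle$ and boundary vectors the identity (left) and $\rho_{ss}$ (right). The initial state $\psi$ is $\theta$-independent; pure-state QFI is $4(\langle\dot\Psi|\dot\Psi\rangle-|\langle\dot\Psi|\Psi\rangle|^2)$. *)

theory Defs
  imports "HOL-Analysis.Analysis" "HOL-Probability.Probability"
begin

text \<open>Matrices are D x D complex matrices indexed by a finite type 'n (D = CARD('n));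
  Kraus labels m range over a finite type 'm (d = CARD('m)).\<close>

definition cmat_adj :: "complex^'n^'n \<Rightarrow> complex^'n^'n" where
  "cmat_adj A = (\<chi> i j. cnj (A $ j $ i))"

definition cscale :: "complex \<Rightarrow> complex^'n^'n \<Rightarrow> complex^'n^'n" where
  "cscale c X = (\<chi> i j. c * X $ i $ j)"

definition density_matrix :: "complex^'n^'n \<Rightarrow> bool" where
  "density_matrix \<rho> \<longleftrightarrow> cmat_adj \<rho> = \<rho>
     \<and> (\<forall>v::complex^'n. 0 \<le> Re (\<Sum>i\<in>UNIV. cnj (v $ i) * (\<rho> *v v) $ i))
     \<and> trace \<rho> = 1"

definition kraus_channel ::
  "(real \<Rightarrow> 'm::finite \<Rightarrow> complex^'n^'n) \<Rightarrow> real \<Rightarrow> complex^'n^'n \<Rightarrow> complex^'n^'n" where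
  "kraus_channel K \<theta> X = (\<Sum>m\<in>UNIV. K \<theta> m ** X ** cmat_adj (K \<theta> m))"

definition irreducible_channel ::
  "(complex^'n^'n \<Rightarrow> complex^'n^'n) \<Rightarrow> complex^'n^'n \<Rightarrow> bool" where
  "irreducible_channel E \<rho> \<longleftrightarrow> density_matrix \<rho>
     \<and> (\<forall>X. E X = X \<longleftrightarrow> (\<exists>c. X = cscale c \<rho>))
     \<and> (\<forall>\<mu> X. X \<noteq> 0 \<and> E X = cscale \<mu> X \<and> \<mu> \<noteq> 1 \<longrightarrow> cmod \<mu> < 1)"

text \<open>kprod K theta [m1,...,mt] = K_{mt} ... K_{m1}.\<close>
definition kprod :: "(real \<Rightarrow> 'm \<Rightarrow> complex^'n^'n) \<Rightarrow> real \<Rightarrow> 'm list \<Rightarrow> complex^'n^'n" where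
  "kprod K \<theta> ms = foldl (\<lambda>P m. K \<theta> m ** P) (mat 1) ms"

definition pure_qfi :: "(real \<Rightarrow> 'a \<Rightarrow> complex) \<Rightarrow> 'a set \<Rightarrow> real \<Rightarrow> real" where
  "pure_qfi \<Psi> I \<theta> =
     (let d\<Psi> = (\<lambda>x. vector_derivative (\<lambda>s. \<Psi> s x) (at \<theta>)) in
      4 * (Re (\<Sum>x\<in>I. cnj (d\<Psi> x) * d\<Psi> x) - (cmod (\<Sum>x\<in>I. cnj (d\<Psi> x) * \<Psi> \<theta> x))^2))"

text \<open>Joint system-emission state sum_m K_{mt}...K_{m1}|psi> (x) |m1...mt>,
  component (i, [m1..mt]).\<close>
definition sys_em_state ::
  "(real \<Rightarrow> 'm \<Rightarrow> complex^'n^'n) \<Rightarrow> complex^'n \<Rightarrow> real \<Rightarrow> ('n \<times> 'm list) \<Rightarrow> complex" where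
  "sys_em_state K \<psi> \<theta> = (\<lambda>(i, ms). (kprod K \<theta> ms *v \<psi>) $ i)"

definition F_SE ::
  "(real \<Rightarrow> 'm::finite \<Rightarrow> complex^'n^'n) \<Rightarrow> real \<Rightarrow> nat \<Rightarrow> complex^'n \<Rightarrow> real" where
  "F_SE K \<theta> t \<psi> = pure_qfi (sys_em_state K \<psi>) (UNIV \<times> {ms. length ms = t}) \<theta>"

text \<open>Haar (unitarily invariant) probability measure on unit vectors of C^D, realised as
  the normalisation x / |x| of a uniformly distributed point of the unit ball.\<close>
definition haar_state :: "(complex^'n::finite) measure" where
  "haar_state = distr (uniform_measure lborel (ball 0 1)) borel (\<lambda>x. x /\<^sub>R norm x)"

definition avg_F_SE :: "(real \<Rightarrow> 'm::finite \<Rightarrow> complex^'n::finite^'n) \<Rightarrow> real \<Rightarrow> nat \<Rightarrow> real" where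
  "avg_F_SE K \<theta> t = (\<integral>\<psi>. F_SE K \<theta> t \<psi> \<partial>haar_state)"

text \<open>xi $ a $ i are the coefficients of |xi> = sum xi_{a i} |a>_A |i>_S; it purifies rho
  iff Tr_A |xi><xi| = rho.\<close>
definition purifies :: "complex^'n^'n \<Rightarrow> complex^'n^'n \<Rightarrow> bool" where
  "purifies \<xi> \<rho> \<longleftrightarrow> (\<forall>i j. \<rho> $ i $ j = (\<Sum>a\<in>UNIV. \<xi> $ a $ i * cnj (\<xi> $ a $ j)))"

text \<open>Emission TI-MPS |Phi_t(theta)> = sum_m (1_A (x) K_{mt}..K_{m1}) |xi> (x) |m1..mt>,
  component (a, i, [m1..mt]).\<close>
definition emission_state ::
  "(real \<Rightarrow> 'm \<Rightarrow> complex^'n^'n) \<Rightarrow> complex^'n^'n \<Rightarrow> real \<Rightarrow> ('n \<times> 'n \<times> 'm list) \<Rightarrow> complex" where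
  "emission_state K \<xi> \<theta> = (\<lambda>(a, i, ms). \<Sum>j\<in>UNIV. kprod K \<theta> ms $ i $ j * \<xi> $ a $ j)"

definition F_E ::
  "(real \<Rightarrow> 'm::finite \<Rightarrow> complex^'n::finite^'n) \<Rightarrow> complex^'n^'n \<Rightarrow> real \<Rightarrow> nat \<Rightarrow> real" where
  "F_E K \<xi> \<theta> t = pure_qfi (emission_state K \<xi>) (UNIV \<times> UNIV \<times> {ms. length ms = t}) \<theta>"

end

theory Submission
  imports Defs "Jordan_Normal_Form.Spectral_Radius"
begin

text \<open>
  Both Fisher informations are values of one functional of the initial system state \<open>X\<close>: with
  \<open>K' = dK/d\<theta>\<close> and the Leibniz rule for the word products \<open>K\<^sub>m\<^sub>t \<cdots> K\<^sub>m\<^sub>1\<close>, the QFI of the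
  emitted state is \<open>4 (Re tr M\<^sub>t(X) - |tr N\<^sub>t(X)|\<^sup>2)\<close>, where \<open>N\<^sub>t\<close> and \<open>M\<^sub>t\<close> obey linear recursions
  driven by the channel \<open>E\<close>. For \<open>X = |\<psi>\<rangle>\<langle>\<psi>|\<close> this is \<open>F\<^sub>S\<^sub>E(t; \<psi>)\<close>, for \<open>X = \<rho>\<^sub>s\<^sub>s\<close> (through the
  purification) it is \<open>F\<^sub>E(t)\<close>. Irreducibility means that \<open>E - tr(\<cdot>) \<rho>\<^sub>s\<^sub>s\<close> has spectral radius
  below 1, so \<open>E\<^sup>n X\<close> converges geometrically fast to \<open>(tr X) \<rho>\<^sub>s\<^sub>s\<close>. Replacing \<open>K'\<close> by
  \<open>K' - \<gamma> K\<close>, which does not change the QFI, removes the stationary part of the cross term;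
  then \<open>tr N\<^sub>t(X)\<close> stays bounded and \<open>Re tr M\<^sub>t(X) = t L + O(1 + \<parallel>X\<parallel>)\<close>. Hence \<open>F\<^sub>E(t)/t \<rightarrow> L\<close>,
  and since the error bound is uniform over pure states, so does the Haar average of \<open>F\<^sub>S\<^sub>E(t)/t\<close>.
\<close>

hide_const (open) Matrix.mat Matrix.vec Matrix.row Matrix.col Determinant.det
no_notation Matrix.vec_index (infixl "$" 100)

lemma matrix_add_rdistrib: "((A::'a::semiring_1^'n^'m) + B) ** C = A ** C + B ** C"
  by (simp add: matrix_matrix_mult_def Finite_Cartesian_Product.vec_eq_iff distrib_right sum.distrib)

lemma matrix_diff_rdistrib: "((A::'a::ring_1^'n^'m) - B) ** C = A ** C - B ** C"
  by (simp add: matrix_matrix_mult_def Finite_Cartesian_Product.vec_eq_iff left_diff_distrib sum_subtractf)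

lemma matrix_diff_ldistrib: "(A::'a::ring_1^'n^'m) ** (B - C) = A ** B - A ** C"
  by (simp add: matrix_matrix_mult_def Finite_Cartesian_Product.vec_eq_iff right_diff_distrib sum_subtractf)

lemma matrix_sum_ldistrib: "(B::'a::semiring_1^'n^'m) ** (\<Sum>i\<in>S. f i) = (\<Sum>i\<in>S. B ** f i)"
  by (induction S rule: infinite_finite_induct) (auto simp: matrix_add_ldistrib)

lemma bounded_bilinear_matrix_matrix_mult:
  "bounded_bilinear ((**) :: 'a::{euclidean_space,real_algebra_1}^'n^'m \<Rightarrow> 'a^'p^'n \<Rightarrow> 'a^'p^'m)"
  unfolding bilinear_conv_bounded_bilinear[symmetric] bilinear_def
  by (auto intro!: linearI simp: matrix_add_ldistrib matrix_add_rdistrib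
      scalar_matrix_assoc matrix_scalar_ac)

lemma trace_zero [simp]: "trace (0::'a::semiring_1^'n^'n) = 0"
  by (simp add: trace_def)

lemma trace_sum: "trace (\<Sum>i\<in>S. f i) = (\<Sum>i\<in>S. trace (f i :: 'a::comm_semiring_1^'n^'n))"
  by (induction S rule: infinite_finite_induct) (auto simp: trace_add)

lemma cscale_mult_left: "cscale c A ** B = cscale c (A ** B)"
  by (simp add: cscale_def matrix_matrix_mult_def Finite_Cartesian_Product.vec_eq_iff sum_distrib_left
      mult.assoc)

lemma cscale_mult_right: "A ** cscale c B = cscale c (A ** B)"
  by (simp add: cscale_def matrix_matrix_mult_def Finite_Cartesian_Product.vec_eq_iff sum_distrib_left
      mult.left_commute)

lemma cscale_add: "cscale c (A + B) = cscale c A + cscale c B"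
  by (simp add: cscale_def Finite_Cartesian_Product.vec_eq_iff distrib_left)

lemma cscale_diff: "cscale c (A - B) = cscale c A - cscale c B"
  by (simp add: cscale_def Finite_Cartesian_Product.vec_eq_iff right_diff_distrib)

lemma cscale_add_scalar: "cscale (c + d) A = cscale c A + cscale d A"
  by (simp add: cscale_def Finite_Cartesian_Product.vec_eq_iff distrib_right)

lemma cscale_cscale: "cscale c (cscale d A) = cscale (c * d) A"
  by (simp add: cscale_def Finite_Cartesian_Product.vec_eq_iff mult.assoc)

lemma cscale_one [simp]: "cscale 1 A = A"
  by (simp add: cscale_def Finite_Cartesian_Product.vec_eq_iff)

lemma cscale_zero [simp]: "cscale 0 A = 0" "cscale c 0 = 0"
  by (simp_all add: cscale_def Finite_Cartesian_Product.vec_eq_iff)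

lemma cscale_sum: "cscale c (\<Sum>i\<in>S. f i) = (\<Sum>i\<in>S. cscale c (f i))"
  by (induction S rule: infinite_finite_induct) (auto simp: cscale_add)

lemma scaleR_eq_cscale: "r *\<^sub>R A = cscale (complex_of_real r) A"
  by (simp add: cscale_def Finite_Cartesian_Product.vec_eq_iff scaleR_conv_of_real[where 'a=complex])

lemma trace_cscale: "trace (cscale c A) = c * trace A"
  by (simp add: cscale_def trace_def sum_distrib_left)

lemma linear_trace: "linear (trace :: complex^'n^'n \<Rightarrow> complex)"
  by (rule linearI) (simp_all add: trace_add scaleR_eq_cscale trace_cscale scaleR_conv_of_real)

lemma cmat_adj_mult: "cmat_adj (A ** B) = cmat_adj B ** cmat_adj A"
  by (simp add: cmat_adj_def matrix_matrix_mult_def Finite_Cartesian_Product.vec_eq_iff mult.commute)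

lemma cmat_adj_cmat_adj [simp]: "cmat_adj (cmat_adj A) = A"
  by (simp add: cmat_adj_def Finite_Cartesian_Product.vec_eq_iff)

lemma cmat_adj_add: "cmat_adj (A + B) = cmat_adj A + cmat_adj B"
  by (simp add: cmat_adj_def Finite_Cartesian_Product.vec_eq_iff)

lemma cmat_adj_diff: "cmat_adj (A - B) = cmat_adj A - cmat_adj B"
  by (simp add: cmat_adj_def Finite_Cartesian_Product.vec_eq_iff)

lemma cmat_adj_sum: "cmat_adj (\<Sum>i\<in>S. f i) = (\<Sum>i\<in>S. cmat_adj (f i))"
  by (induction S rule: infinite_finite_induct)
    (auto simp: cmat_adj_add cmat_adj_def Finite_Cartesian_Product.vec_eq_iff)

lemma cmat_adj_cscale: "cmat_adj (cscale c A) = cscale (cnj c) (cmat_adj A)"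
  by (simp add: cmat_adj_def cscale_def Finite_Cartesian_Product.vec_eq_iff)

lemma trace_cmat_adj: "trace (cmat_adj A) = cnj (trace A)"
  by (simp add: cmat_adj_def trace_def)

lemma cmat_adj_mat_1 [simp]: "cmat_adj (mat 1) = mat 1"
  by (simp add: cmat_adj_def Finite_Cartesian_Product.mat_def Finite_Cartesian_Product.vec_eq_iff)

definition kraus_sum ::
  "'i set \<Rightarrow> ('i \<Rightarrow> complex^'n^'n) \<Rightarrow> ('i \<Rightarrow> complex^'n^'n) \<Rightarrow> complex^'n^'n \<Rightarrow> complex^'n^'n" where
  "kraus_sum I P Q X = (\<Sum>i\<in>I. P i ** X ** cmat_adj (Q i))"

lemma kraus_channel_eq: "kraus_channel K \<theta> = kraus_sum UNIV (K \<theta>) (K \<theta>)"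
  by (simp add: fun_eq_iff kraus_channel_def kraus_sum_def)

lemma kraus_sum_add: "kraus_sum I P Q (X + Y) = kraus_sum I P Q X + kraus_sum I P Q Y"
  by (simp add: kraus_sum_def matrix_add_ldistrib matrix_add_rdistrib sum.distrib)

lemma kraus_sum_diff: "kraus_sum I P Q (X - Y) = kraus_sum I P Q X - kraus_sum I P Q Y"
  by (simp add: kraus_sum_def matrix_diff_ldistrib matrix_diff_rdistrib sum_subtractf)

lemma kraus_sum_cscale: "kraus_sum I P Q (cscale c X) = cscale c (kraus_sum I P Q X)"
  by (simp add: kraus_sum_def cscale_mult_left cscale_mult_right cscale_sum)

lemma linear_kraus_sum: "linear (kraus_sum I P Q)"
  by (rule linearI) (simp_all add: kraus_sum_add scaleR_eq_cscale kraus_sum_cscale)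

lemma kraus_sum_sum: "kraus_sum I P Q (\<Sum>j\<in>S. f j) = (\<Sum>j\<in>S. kraus_sum I P Q (f j))"
  by (rule linear_sum[OF linear_kraus_sum])

lemma bounded_linear_kraus_sum: "bounded_linear (kraus_sum I P Q)"
  using linear_kraus_sum linear_conv_bounded_linear by blast

lemma bounded_linear_trace_kraus_sum: "bounded_linear (\<lambda>Y. trace (kraus_sum I P Q Y))"
  using linear_compose[OF linear_kraus_sum linear_trace] linear_conv_bounded_linear by (auto simp: o_def)

lemma cmat_adj_kraus_sum: "cmat_adj (kraus_sum I P Q X) = kraus_sum I Q P (cmat_adj X)"
  by (simp add: kraus_sum_def cmat_adj_sum cmat_adj_mult matrix_mul_assoc)

lemma kraus_sum_diff_left:
  "kraus_sum I (\<lambda>i. P i - cscale c (R i)) Q X = kraus_sum I P Q X - cscale c (kraus_sum I R Q X)"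
  by (simp add: kraus_sum_def matrix_diff_rdistrib cscale_mult_left sum_subtractf cscale_sum)

lemma kraus_sum_diff_right:
  "kraus_sum I P (\<lambda>i. Q i - cscale c (R i)) X = kraus_sum I P Q X - cscale (cnj c) (kraus_sum I P R X)"
  by (simp add: kraus_sum_def cmat_adj_diff cmat_adj_cscale matrix_diff_ldistrib cscale_mult_right
      sum_subtractf cscale_sum)

lemma kraus_sum_cong:
  "(\<And>i. i \<in> I \<Longrightarrow> P i = P' i) \<Longrightarrow> (\<And>i. i \<in> I \<Longrightarrow> Q i = Q' i) \<Longrightarrow> kraus_sum I P Q = kraus_sum I P' Q'"
  by (simp add: kraus_sum_def fun_eq_iff)

lemma trace_kraus_sum: "trace (kraus_sum I P Q X) = trace (X ** (\<Sum>i\<in>I. cmat_adj (Q i) ** P i))"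
proof -
  have "trace (P i ** X ** cmat_adj (Q i)) = trace (X ** (cmat_adj (Q i) ** P i))" for i
    by (metis matrix_mul_assoc trace_mul_sym)
  then show ?thesis
    by (simp add: kraus_sum_def trace_sum matrix_sum_ldistrib)
qed

lemma trace_kraus_sum_funpow:
  assumes "(\<Sum>m\<in>UNIV. cmat_adj (K m) ** K m) = mat 1"
  shows "trace ((kraus_sum UNIV K K ^^ n) X) = trace X"
  by (induction n) (simp_all add: trace_kraus_sum assms)

lemma kraus_sum_funpow_add:
  "(kraus_sum I P Q ^^ n) (X + Y) = (kraus_sum I P Q ^^ n) X + (kraus_sum I P Q ^^ n) Y"
  by (induction n) (simp_all add: kraus_sum_add)

primrec word_mat :: "('m \<Rightarrow> 'a::semiring_1^'n^'n) \<Rightarrow> 'm list \<Rightarrow> 'a^'n^'n" where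
  "word_mat K [] = mat 1"
| "word_mat K (m # ms) = K m ** word_mat K ms"

primrec word_mat_deriv :: "('m \<Rightarrow> 'a::semiring_1^'n^'n) \<Rightarrow> ('m \<Rightarrow> 'a^'n^'n) \<Rightarrow> 'm list \<Rightarrow> 'a^'n^'n" where
  "word_mat_deriv K K' [] = 0"
| "word_mat_deriv K K' (m # ms) = K' m ** word_mat K ms + K m ** word_mat_deriv K K' ms"

lemma kprod_eq_word_mat: "kprod K \<theta> ms = word_mat (K \<theta>) (rev ms)"
proof -
  have "foldl (\<lambda>P m. K \<theta> m ** P) A ms = word_mat (K \<theta>) (rev ms) ** A" for A
    by (induction ms arbitrary: A rule: rev_induct) (auto simp: matrix_mul_assoc)
  then show ?thesis
    unfolding kprod_def by (metis matrix_mul_rid)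
qed

lemma has_vector_derivative_word_mat:
  fixes K :: "real \<Rightarrow> 'm \<Rightarrow> complex^'n^'n"
  assumes "\<And>m. ((\<lambda>s. K s m) has_vector_derivative K' m) (at \<theta>)"
  shows "((\<lambda>s. word_mat (K s) ms) has_vector_derivative word_mat_deriv (K \<theta>) K' ms) (at \<theta>)"
proof (induction ms)
  case Nil
  then show ?case by simp
next
  case (Cons m ms)
  from bounded_bilinear.has_vector_derivative[OF bounded_bilinear_matrix_matrix_mult assms Cons.IH]
  show ?case by (simp add: add.commute)
qed

lemma word_mat_deriv_gauge:
  "word_mat_deriv K (\<lambda>m. K' m - cscale c (K m)) ms
     = word_mat_deriv K K' ms - cscale (c * of_nat (length ms)) (word_mat K ms)"
proof -
  have "word_mat_deriv K K' ms
      = word_mat_deriv K (\<lambda>m. K' m - cscale c (K m)) ms + cscale (c * of_nat (length ms)) (word_mat K ms)"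
    by (induction ms)
      (simp_all add: matrix_add_rdistrib matrix_add_ldistrib matrix_diff_rdistrib cscale_mult_left
        cscale_mult_right distrib_left cscale_add_scalar algebra_simps)
  then show ?thesis by simp
qed

lemma sum_words_Suc:
  "(\<Sum>ms | length ms = Suc t. f ms) = (\<Sum>ms | length ms = t. \<Sum>m\<in>(UNIV :: 'm::finite set). f (m # ms))"
proof -
  have img: "{ms :: 'm list. length ms = Suc t} = (\<lambda>(ms, m). m # ms) ` ({ms. length ms = t} \<times> UNIV)"
    using lists_length_Suc_eq[of "UNIV :: 'm set" t] by simp
  have inj: "inj_on (\<lambda>(ms, m). m # ms) ({ms :: 'm list. length ms = t} \<times> UNIV)"
    by (auto simp: inj_on_def)
  have "(\<Sum>ms | length ms = Suc t. f ms) = (\<Sum>(ms, m)\<in>{ms. length ms = t} \<times> UNIV. f (m # ms))"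
    unfolding img by (subst sum.reindex[OF inj]) (simp add: case_prod_beta)
  then show ?thesis
    by (simp add: sum.cartesian_product)
qed

lemma sum_words_rev: "(\<Sum>ms | length ms = t. f (rev ms)) = (\<Sum>ms | length ms = t. f (ms :: 'a list))"
proof -
  have img: "rev ` {ms :: 'a list. length ms = t} = {ms. length ms = t}"
    by (auto simp: image_iff intro!: exI[of _ "rev x" for x])
  have inj: "inj_on rev {ms :: 'a list. length ms = t}"
    by (simp add: inj_on_def)
  show ?thesis
    using sum.reindex[OF inj, of f] unfolding img comp_def by (rule sym)
qed

section \<open>Emission channels\<close>

definition mixed_channel ::
  "('m::finite \<Rightarrow> complex^'n^'n) \<Rightarrow> ('m \<Rightarrow> complex^'n^'n) \<Rightarrow> nat \<Rightarrow> complex^'n^'n \<Rightarrow> complex^'n^'n" where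
  "mixed_channel K K' t = kraus_sum {ms. length ms = t} (word_mat_deriv K K') (word_mat K)"

definition deriv_channel ::
  "('m::finite \<Rightarrow> complex^'n^'n) \<Rightarrow> ('m \<Rightarrow> complex^'n^'n) \<Rightarrow> nat \<Rightarrow> complex^'n^'n \<Rightarrow> complex^'n^'n" where
  "deriv_channel K K' t = kraus_sum {ms. length ms = t} (word_mat_deriv K K') (word_mat_deriv K K')"

text \<open>
  For a system state \<open>X\<close> and \<open>K'\<close> the derivative of the Kraus operators, \<open>emission_qfi\<close> is the
  pure-state QFI of the joint state emitted from any purification of \<open>X\<close>: over words \<open>w\<close> of
  length \<open>t\<close>, \<open>mixed_channel\<close> sums \<open>D\<^sub>w X W\<^sub>w\<^sup>\<dagger>\<close> and \<open>deriv_channel\<close> sums \<open>D\<^sub>w X D\<^sub>w\<^sup>\<dagger>\<close>, where \<open>W\<^sub>w\<close>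
  is the word product and \<open>D\<^sub>w\<close> its derivative.
\<close>

definition emission_qfi ::
  "('m::finite \<Rightarrow> complex^'n^'n) \<Rightarrow> ('m \<Rightarrow> complex^'n^'n) \<Rightarrow> nat \<Rightarrow> complex^'n^'n \<Rightarrow> real" where
  "emission_qfi K K' t X =
     4 * (Re (trace (deriv_channel K K' t X)) - (cmod (trace (mixed_channel K K' t X)))\<^sup>2)"

lemma kraus_sum_words_funpow:
  fixes K :: "'m::finite \<Rightarrow> complex^'n^'n"
  shows "kraus_sum {ms. length ms = t} (word_mat K) (word_mat K) X = (kraus_sum UNIV K K ^^ t) X"
proof (induction t)
  case 0
  then show ?case by (simp add: kraus_sum_def)
next
  case (Suc t)
  have "kraus_sum {ms. length ms = Suc t} (word_mat K) (word_mat K) X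
      = (\<Sum>ms | length ms = t. kraus_sum UNIV K K (word_mat K ms ** X ** cmat_adj (word_mat K ms)))"
    by (simp add: kraus_sum_def sum_words_Suc cmat_adj_mult matrix_mul_assoc)
  also have "\<dots> = kraus_sum UNIV K K (kraus_sum {ms. length ms = t} (word_mat K) (word_mat K) X)"
    by (simp add: kraus_sum_sum kraus_sum_def[of "{ms. length ms = t}"])
  finally show ?case using Suc by simp
qed

lemma mixed_channel_Suc:
  "mixed_channel K K' (Suc t) X
     = kraus_sum UNIV K' K ((kraus_sum UNIV K K ^^ t) X) + kraus_sum UNIV K K (mixed_channel K K' t X)"
proof -
  let ?W = "word_mat K" and ?D = "word_mat_deriv K K'"
  have "mixed_channel K K' (Suc t) X = (\<Sum>ms | length ms = t.
      kraus_sum UNIV K' K (?W ms ** X ** cmat_adj (?W ms)) + kraus_sum UNIV K K (?D ms ** X ** cmat_adj (?W ms)))"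
    by (simp add: mixed_channel_def kraus_sum_def sum_words_Suc cmat_adj_mult matrix_mul_assoc
        matrix_add_rdistrib sum.distrib)
  then show ?thesis
    by (simp add: sum.distrib kraus_sum_sum[symmetric] mixed_channel_def kraus_sum_words_funpow[symmetric])
      (simp add: kraus_sum_def)
qed

lemma cmat_adj_mixed_channel:
  assumes "cmat_adj X = X"
  shows "cmat_adj (mixed_channel K K' t X) = kraus_sum {ms. length ms = t} (word_mat K) (word_mat_deriv K K') X"
  using assms by (simp add: mixed_channel_def cmat_adj_kraus_sum)

lemma deriv_channel_Suc:
  assumes "cmat_adj X = X"
  shows "deriv_channel K K' (Suc t) X
     = kraus_sum UNIV K' K' ((kraus_sum UNIV K K ^^ t) X) + kraus_sum UNIV K' K (cmat_adj (mixed_channel K K' t X))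
       + kraus_sum UNIV K K' (mixed_channel K K' t X) + kraus_sum UNIV K K (deriv_channel K K' t X)"
proof -
  let ?W = "word_mat K" and ?D = "word_mat_deriv K K'"
  have "deriv_channel K K' (Suc t) X = (\<Sum>ms | length ms = t.
      kraus_sum UNIV K' K' (?W ms ** X ** cmat_adj (?W ms)) + kraus_sum UNIV K' K (?W ms ** X ** cmat_adj (?D ms))
      + kraus_sum UNIV K K' (?D ms ** X ** cmat_adj (?W ms)) + kraus_sum UNIV K K (?D ms ** X ** cmat_adj (?D ms)))"
    by (simp add: deriv_channel_def kraus_sum_def sum_words_Suc cmat_adj_mult cmat_adj_add matrix_mul_assoc
        matrix_add_rdistrib matrix_add_ldistrib sum.distrib add.assoc)
  then show ?thesis
    by (simp add: sum.distrib kraus_sum_sum[symmetric] kraus_sum_words_funpow[symmetric]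
        mixed_channel_def deriv_channel_def)
      (simp add: kraus_sum_def cmat_adj_sum cmat_adj_mult matrix_mul_assoc assms)
qed

lemma mixed_channel_eq_sum:
  "mixed_channel K K' k X
     = (\<Sum>j<k. (kraus_sum UNIV K K ^^ (k - Suc j)) (kraus_sum UNIV K' K ((kraus_sum UNIV K K ^^ j) X)))"
proof (induction k)
  case 0
  then show ?case by (simp add: mixed_channel_def kraus_sum_def)
next
  case (Suc k)
  have "Suc k - Suc j = Suc (k - Suc j)" if "j < k" for j
    using that by simp
  then show ?case
    by (simp add: mixed_channel_Suc Suc kraus_sum_sum)
qed

lemma trace_mixed_channel:
  assumes "(\<Sum>m\<in>UNIV. cmat_adj (K m) ** K m) = mat 1"
  shows "trace (mixed_channel K K' t X) = (\<Sum>k<t. trace (kraus_sum UNIV K' K ((kraus_sum UNIV K K ^^ k) X)))"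
  by (simp add: mixed_channel_eq_sum trace_sum trace_kraus_sum_funpow[OF assms])

lemma re_trace_deriv_channel:
  assumes "(\<Sum>m\<in>UNIV. cmat_adj (K m) ** K m) = mat 1" and "cmat_adj X = X"
  shows "Re (trace (deriv_channel K K' t X)) = (\<Sum>k<t. Re (trace (kraus_sum UNIV K' K' ((kraus_sum UNIV K K ^^ k) X)))
           + 2 * Re (trace (kraus_sum UNIV K K' (mixed_channel K K' k X))))"
proof (induction t)
  case 0
  then show ?case by (simp add: deriv_channel_def kraus_sum_def)
next
  case (Suc t)
  have "trace (kraus_sum UNIV K' K (cmat_adj Y)) = cnj (trace (kraus_sum UNIV K K' Y))" for Y
    by (metis cmat_adj_cmat_adj cmat_adj_kraus_sum trace_cmat_adj)
  then show ?case
    using Suc trace_kraus_sum_funpow[OF assms(1), of 1]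
    by (simp add: deriv_channel_Suc[OF assms(2)] trace_add)
qed

lemma emission_qfi_gauge:
  assumes tp: "(\<Sum>m\<in>UNIV. cmat_adj (K m) ** K m) = mat 1"
    and herm: "cmat_adj X = X" and tr: "trace X = 1"
  shows "emission_qfi K (\<lambda>m. K' m - cscale c (K m)) t X = emission_qfi K K' t X"
proof -
  let ?L = "{ms. length ms = t}" and ?W = "word_mat K" and ?D = "word_mat_deriv K K'"
  define K'' where "K'' = (\<lambda>m. K' m - cscale c (K m))"
  define c' where "c' = c * of_nat t"
  have D: "kraus_sum ?L (word_mat_deriv K K'') Q = kraus_sum ?L (\<lambda>ms. ?D ms - cscale c' (?W ms)) Q" for Q
    by (rule kraus_sum_cong) (simp_all add: K''_def c'_def word_mat_deriv_gauge)
  have D': "kraus_sum ?L P (word_mat_deriv K K'') = kraus_sum ?L P (\<lambda>ms. ?D ms - cscale c' (?W ms))" for P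
    by (rule kraus_sum_cong) (simp_all add: K''_def c'_def word_mat_deriv_gauge)
  define n where "n = trace (mixed_channel K K' t X)"
  have trW: "trace (kraus_sum ?L ?W ?W X) = 1"
    by (simp add: kraus_sum_words_funpow trace_kraus_sum_funpow[OF tp] tr)
  have trWD: "trace (kraus_sum ?L ?W ?D X) = cnj n"
    unfolding n_def by (metis cmat_adj_mixed_channel[OF herm] trace_cmat_adj)
  have mixed: "trace (mixed_channel K K'' t X) = n - c'"
    by (simp add: mixed_channel_def D kraus_sum_diff_left trace_sub trace_cscale trW n_def)
  moreover have deriv: "trace (deriv_channel K K'' t X)
      = trace (deriv_channel K K' t X) - cnj c' * n - c' * cnj n + c' * cnj c'"
  proof -
    have eq: "deriv_channel K K'' t X = deriv_channel K K' t X - cscale (cnj c') (mixed_channel K K' t X)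
        - cscale c' (kraus_sum ?L ?W ?D X - cscale (cnj c') (kraus_sum ?L ?W ?W X))"
      unfolding deriv_channel_def mixed_channel_def D D' kraus_sum_diff_left kraus_sum_diff_right ..
    show ?thesis
      unfolding eq trace_sub trace_cscale trW trWD n_def[symmetric] by (simp add: algebra_simps)
  qed
  show ?thesis
    unfolding K''_def[symmetric] emission_qfi_def mixed deriv n_def[symmetric]
    by (simp add: cmod_power2) (simp add: power2_eq_square algebra_simps)
qed

section \<open>Fisher information of the emitted states\<close>

definition dyad :: "complex^'n \<Rightarrow> complex^'n^'n" where
  "dyad v = (\<chi> i j. v $ i * cnj (v $ j))"

lemma cmat_adj_dyad: "cmat_adj (dyad v) = dyad v"
  by (simp add: cmat_adj_def dyad_def Finite_Cartesian_Product.vec_eq_iff)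

lemma trace_dyad: "trace (dyad v) = complex_of_real ((norm v)\<^sup>2)"
proof -
  have "(norm v)\<^sup>2 = (\<Sum>i\<in>UNIV. (cmod (v $ i))\<^sup>2)"
    by (simp add: norm_vec_def L2_set_def sum_nonneg)
  then show ?thesis
    by (simp add: trace_def dyad_def complex_mult_cnj cmod_power2)
qed

lemma norm_dyad: "norm (dyad v) = (norm v)\<^sup>2"
proof -
  have "norm (dyad v $ i) = norm v * cmod (v $ i)" for i
    by (simp add: norm_vec_def dyad_def norm_mult L2_set_right_distrib mult.commute)
  then have "norm (dyad v) = L2_set (\<lambda>i. norm v * cmod (v $ i)) UNIV"
    by (simp add: norm_vec_def[of "dyad v"])
  also have "\<dots> = norm v * norm v"
    by (simp add: L2_set_right_distrib[symmetric] norm_vec_def[of v])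
  finally show ?thesis
    by (simp add: power2_eq_square)
qed

lemma purifies_eq_sum_dyad: "purifies \<xi> \<rho> \<Longrightarrow> \<rho> = (\<Sum>a\<in>UNIV. dyad (\<xi> $ a))"
  by (simp add: purifies_def Finite_Cartesian_Product.vec_eq_iff dyad_def sum_component)

lemma sum_cnj_mult_eq_trace:
  "(\<Sum>i\<in>UNIV. cnj ((A *v v) $ i) * (B *v v) $ i) = trace (B ** dyad v ** cmat_adj A)"
proof -
  have Bv: "(B ** dyad v) $ i $ k = (B *v v) $ i * cnj (v $ k)" for i k
    by (simp add: matrix_matrix_mult_def dyad_def matrix_vector_mult_def sum_distrib_right mult.assoc)
  have "(B ** dyad v ** cmat_adj A) $ i $ i = (\<Sum>k\<in>UNIV. (B *v v) $ i * (cnj (v $ k) * cnj (A $ i $ k)))" for i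
    by (simp add: matrix_matrix_mult_def[of "B ** dyad v"] cmat_adj_def Bv mult.assoc)
  also have "\<dots> i = (B *v v) $ i * cnj ((A *v v) $ i)" for i
    by (simp add: sum_distrib_left matrix_vector_mult_def mult.commute)
  finally show ?thesis
    by (simp add: trace_def mult.commute)
qed

lemma pure_qfi_eq:
  assumes "\<And>x. x \<in> I \<Longrightarrow> ((\<lambda>s. \<Psi> s x) has_vector_derivative d\<Psi> x) (at \<theta>)"
  shows "pure_qfi \<Psi> I \<theta> = 4 * (Re (\<Sum>x\<in>I. cnj (d\<Psi> x) * d\<Psi> x) - (cmod (\<Sum>x\<in>I. cnj (\<Psi> \<theta> x) * d\<Psi> x))\<^sup>2)"
proof -
  have "cnj (\<Sum>x\<in>I. cnj (d\<Psi> x) * \<Psi> \<theta> x) = (\<Sum>x\<in>I. cnj (\<Psi> \<theta> x) * d\<Psi> x)"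
    by (simp add: mult.commute)
  then have "cmod (\<Sum>x\<in>I. cnj (d\<Psi> x) * \<Psi> \<theta> x) = cmod (\<Sum>x\<in>I. cnj (\<Psi> \<theta> x) * d\<Psi> x)"
    by (metis complex_mod_cnj)
  then show ?thesis
    unfolding pure_qfi_def Let_def by (simp add: vector_derivative_at[OF assms] cong: sum.cong)
qed

lemma has_vector_derivative_kprod_apply:
  fixes K :: "real \<Rightarrow> 'm \<Rightarrow> complex^'n^'n"
  assumes "\<And>m. ((\<lambda>s. K s m) has_vector_derivative K' m) (at \<theta>)"
  shows "((\<lambda>s. (kprod K s ms *v v) $ i) has_vector_derivative (word_mat_deriv (K \<theta>) K' (rev ms) *v v) $ i) (at \<theta>)"
proof -
  have "linear (\<lambda>A::complex^'n^'n. (A *v v) $ i)"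
    by (rule linearI) (simp_all add: matrix_vector_mult_def scaleR_sum_right sum.distrib distrib_right)
  then have "bounded_linear (\<lambda>A::complex^'n^'n. (A *v v) $ i)"
    by (simp add: linear_conv_bounded_linear)
  from bounded_linear.has_vector_derivative[OF this has_vector_derivative_word_mat[OF assms]]
  show ?thesis
    by (simp add: kprod_eq_word_mat)
qed

lemma sum_word_states_eq_trace:
  "(\<Sum>x\<in>UNIV \<times> {ms. length ms = t}. cnj ((A (rev (snd x)) *v v) $ fst x) * (B (rev (snd x)) *v v) $ fst x)
     = trace (kraus_sum {ms. length ms = t} B A (dyad v))"
proof -
  have "(\<Sum>x\<in>UNIV \<times> {ms. length ms = t}. cnj ((A (rev (snd x)) *v v) $ fst x) * (B (rev (snd x)) *v v) $ fst x)
      = (\<Sum>ms | length ms = t. \<Sum>i\<in>UNIV. cnj ((A (rev ms) *v v) $ i) * (B (rev ms) *v v) $ i)"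
    by (simp add: sum.cartesian_product' sum.swap[of _ UNIV])
  also have "\<dots> = (\<Sum>ms | length ms = t. trace (B ms ** dyad v ** cmat_adj (A ms)))"
    by (simp add: sum_cnj_mult_eq_trace sum_words_rev[where f = "\<lambda>ms. trace (B ms ** dyad v ** cmat_adj (A ms))"])
  finally show ?thesis
    by (simp add: kraus_sum_def trace_sum)
qed

lemma F_SE_eq_emission_qfi:
  assumes "\<And>m. ((\<lambda>s. K s m) has_vector_derivative K' m) (at \<theta>)"
  shows "F_SE K \<theta> t \<psi> = emission_qfi (K \<theta>) K' t (dyad \<psi>)"
proof -
  let ?D = "word_mat_deriv (K \<theta>) K'" and ?W = "word_mat (K \<theta>)" and ?I = "UNIV \<times> {ms. length ms = t}"
  have "F_SE K \<theta> t \<psi>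
      = 4 * (Re (\<Sum>x\<in>?I. cnj ((?D (rev (snd x)) *v \<psi>) $ fst x) * (?D (rev (snd x)) *v \<psi>) $ fst x)
          - (cmod (\<Sum>x\<in>?I. cnj ((?W (rev (snd x)) *v \<psi>) $ fst x) * (?D (rev (snd x)) *v \<psi>) $ fst x))\<^sup>2)"
    unfolding F_SE_def
    by (subst pure_qfi_eq[where d\<Psi> = "\<lambda>x. (?D (rev (snd x)) *v \<psi>) $ fst x"])
      (auto simp: sys_em_state_def case_prod_beta kprod_eq_word_mat
        intro: has_vector_derivative_kprod_apply[OF assms, simplified kprod_eq_word_mat])
  then show ?thesis
    by (simp add: sum_word_states_eq_trace emission_qfi_def deriv_channel_def mixed_channel_def)
qed

lemma F_E_eq_emission_qfi:
  assumes "\<And>m. ((\<lambda>s. K s m) has_vector_derivative K' m) (at \<theta>)" and "purifies \<xi> \<rho>"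
  shows "F_E K \<xi> \<theta> t = emission_qfi (K \<theta>) K' t \<rho>"
proof -
  let ?D = "word_mat_deriv (K \<theta>) K'" and ?I = "UNIV \<times> UNIV \<times> {ms. length ms = t}"
  have sum_eq: "(\<Sum>x\<in>?I. cnj ((A (rev (snd (snd x))) *v \<xi> $ fst x) $ fst (snd x))
                   * (B (rev (snd (snd x))) *v \<xi> $ fst x) $ fst (snd x))
      = trace (kraus_sum {ms. length ms = t} B A \<rho>)" for A B
  proof -
    have "(\<Sum>x\<in>?I. cnj ((A (rev (snd (snd x))) *v \<xi> $ fst x) $ fst (snd x))
                   * (B (rev (snd (snd x))) *v \<xi> $ fst x) $ fst (snd x))
        = (\<Sum>a\<in>UNIV. trace (kraus_sum {ms. length ms = t} B A (dyad (\<xi> $ a))))"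
      unfolding sum.cartesian_product'[of _ UNIV "UNIV \<times> {ms. length ms = t}"] fst_conv snd_conv
      by (simp only: sum_word_states_eq_trace)
    then show ?thesis
      by (simp add: trace_sum[symmetric] kraus_sum_sum[symmetric] purifies_eq_sum_dyad[OF assms(2)])
  qed
  have "emission_state K \<xi> s x = (kprod K s (snd (snd x)) *v \<xi> $ fst x) $ fst (snd x)" for s x
    by (simp add: emission_state_def matrix_vector_mult_def case_prod_beta)
  then have "F_E K \<xi> \<theta> t = 4 * (Re (\<Sum>x\<in>?I. cnj ((?D (rev (snd (snd x))) *v \<xi> $ fst x) $ fst (snd x))
                   * (?D (rev (snd (snd x))) *v \<xi> $ fst x) $ fst (snd x))
      - (cmod (\<Sum>x\<in>?I. cnj ((word_mat (K \<theta>) (rev (snd (snd x))) *v \<xi> $ fst x) $ fst (snd x))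
                   * (?D (rev (snd (snd x))) *v \<xi> $ fst x) $ fst (snd x)))\<^sup>2)"
    unfolding F_E_def
    by (subst pure_qfi_eq[where d\<Psi> = "\<lambda>x. (?D (rev (snd (snd x))) *v \<xi> $ fst x) $ fst (snd x)"])
      (auto simp: kprod_eq_word_mat
        intro: has_vector_derivative_kprod_apply[OF assms(1), simplified kprod_eq_word_mat])
  then show ?thesis
    by (simp only: sum_eq emission_qfi_def deriv_channel_def mixed_channel_def)
qed

lemma continuous_on_emission_qfi_dyad: "continuous_on UNIV (\<lambda>\<psi>. emission_qfi K K' t (dyad \<psi>))"
proof -
  have "continuous_on UNIV (\<lambda>\<psi>::complex^'n. trace (kraus_sum I P Q (dyad \<psi>)))" for I P Q
    by (rule continuous_on_compose2[OF linear_continuous_on[OF bounded_linear_trace_kraus_sum]])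
      (auto simp: dyad_def intro!: continuous_intros)
  then show ?thesis
    unfolding emission_qfi_def deriv_channel_def mixed_channel_def by (intro continuous_intros)
qed

section \<open>Geometric decay from the spectrum\<close>

lemma eigenvalue_smult_mat:
  fixes B :: "'a::comm_ring_1 mat"
  assumes B: "B \<in> carrier_mat N N" and eig: "eigenvalue B \<nu>"
  shows "eigenvalue (c \<cdot>\<^sub>m B) (c * \<nu>)"
proof -
  obtain v where v: "v \<in> carrier_vec N" "v \<noteq> 0\<^sub>v N" "B *\<^sub>v v = \<nu> \<cdot>\<^sub>v v"
    using eig B unfolding eigenvalue_def eigenvector_def by auto
  have "(c \<cdot>\<^sub>m B) *\<^sub>v v = c \<cdot>\<^sub>v (B *\<^sub>v v)"
    using v(1) B by (auto intro!: eq_vecI)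
  then show ?thesis
    using v B unfolding eigenvalue_def eigenvector_def by (auto simp: smult_smult_assoc)
qed

lemma pow_smult_mat:
  fixes B :: "'a::comm_ring_1 mat"
  assumes B: "B \<in> carrier_mat N N"
  shows "(c \<cdot>\<^sub>m B) ^\<^sub>m k = c ^ k \<cdot>\<^sub>m B ^\<^sub>m k"
proof (induction k)
  case 0
  then show ?case
    using B by (auto intro!: eq_matI)
next
  case (Suc k)
  have "(c \<cdot>\<^sub>m B) ^\<^sub>m Suc k = c \<cdot>\<^sub>m (c ^ k \<cdot>\<^sub>m (B ^\<^sub>m k * B))"
    using B by (simp add: Suc mult_smult_assoc_mat[of _ N N _ N] mult_smult_distrib[of _ N N _ N])
  also have "\<dots> = c ^ Suc k \<cdot>\<^sub>m B ^\<^sub>m Suc k"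
    using B by (auto intro!: eq_matI)
  finally show ?case .
qed

lemma mat_power_geometric_decay:
  fixes A :: "complex mat"
  assumes A: "A \<in> carrier_mat N N" and ev: "\<And>\<mu>. eigenvalue A \<mu> \<Longrightarrow> cmod \<mu> < 1"
  shows "\<exists>c s. 0 < s \<and> s < 1 \<and> (\<forall>k i j. i < N \<longrightarrow> j < N \<longrightarrow> cmod ((A ^\<^sub>m k) $$ (i, j)) \<le> c * s ^ k)"
proof (cases "N = 0")
  case True
  then show ?thesis by (intro exI[of _ 0] exI[of _ "1/2"]) simp
next
  case False
  define r where "r = spectral_radius A"
  have r: "0 \<le> r" "r < 1"
    using spectral_radius_mem_max(1)[OF A] False ev unfolding r_def spectrum_def by auto
  define s where "s = (1 + r) / 2"
  have s: "0 < s" "s < 1" "r < s"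
    using r unfolding s_def by auto
  \<comment> \<open>\<open>B = A / s\<close> has spectral radius \<open>r / s < 1\<close>, hence bounded powers, and \<open>A ^ k = s ^ k B ^ k\<close>.\<close>
  define B where "B = complex_of_real (1 / s) \<cdot>\<^sub>m A"
  have B: "B \<in> carrier_mat N N"
    using A unfolding B_def by simp
  have A_eq: "A = complex_of_real s \<cdot>\<^sub>m B"
    using A s unfolding B_def by (auto intro!: eq_matI)
  have "cmod \<nu> < 1" if "eigenvalue B \<nu>" for \<nu>
  proof -
    have "s * cmod \<nu> \<le> r"
      using spectral_radius_mem_max(2)[OF A] eigenvalue_smult_mat[OF B that, of "complex_of_real s"] False s
      unfolding r_def spectrum_def A_eq[symmetric] by (force simp: norm_mult)
    then have "s * cmod \<nu> < s * 1"
      using s by linarith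
    then show ?thesis
      using s(1) mult_less_cancel_left_pos by blast
  qed
  then have "spectral_radius B < 1"
    using spectral_radius_mem_max(1)[OF B] False unfolding spectrum_def by auto
  then obtain c where c: "\<And>k. norm_bound (B ^\<^sub>m k) c"
    using spectral_radius_jnf_norm_bound_less_1_upper_triangular[OF B] by auto
  have "cmod ((A ^\<^sub>m k) $$ (i, j)) \<le> c * s ^ k" if "i < N" "j < N" for k i j
    using c[of k] that B s unfolding norm_bound_def A_eq pow_smult_mat[OF B]
    by (auto simp: norm_mult norm_power mult.commute intro: mult_left_mono)
  then show ?thesis
    using s by blast
qed

lemma jnf_enumeration_mult_mat_vec:
  assumes h: "bij_betw h {0..<N} UNIV"
  shows "Matrix.vec N (\<lambda>p. (M *v x) $ h p)
           = Matrix.mat N N (\<lambda>(p, q). M $ h p $ h q) *\<^sub>v Matrix.vec N (\<lambda>p. x $ h p)"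
proof -
  have "(M *v x) $ i = (\<Sum>j\<in>UNIV. M $ i $ j * x $ j)" for i
    by (simp add: matrix_vector_mult_def)
  also have "\<dots> i = (\<Sum>q\<in>{0..<N}. M $ i $ h q * x $ h q)" for i
    by (rule sum.reindex_bij_betw[OF h, symmetric])
  finally show ?thesis
    by (intro eq_vecI) (simp_all add: scalar_prod_def Matrix.row_def)
qed

lemma jnf_enumeration_eigenvalue:
  assumes h: "bij_betw h {0..<N} UNIV" and eig: "eigenvalue (Matrix.mat N N (\<lambda>(p, q). M $ h p $ h q)) \<mu>"
  shows "\<exists>x. x \<noteq> 0 \<and> M *v x = \<mu> *s x"
proof -
  let ?A = "Matrix.mat N N (\<lambda>(p, q). M $ h p $ h q)"
  obtain v where v: "v \<in> carrier_vec N" "v \<noteq> 0\<^sub>v N" "?A *\<^sub>v v = \<mu> \<cdot>\<^sub>v v"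
    using eig unfolding eigenvalue_def eigenvector_def by auto
  define e where "e = the_inv_into {0..<N} h"
  have e: "e i < N" "h (e i) = i" for i
    using bij_betw_the_inv_into[OF h] f_the_inv_into_f_bij_betw[OF h] unfolding e_def
    by (auto dest: bij_betwE)
  have eh: "e (h p) = p" if "p < N" for p
    using h that unfolding e_def bij_betw_def by (simp add: the_inv_into_f_f)
  define x where "x = (\<chi> i. Matrix.vec_index v (e i))"
  have v_eq: "v = Matrix.vec N (\<lambda>p. x $ h p)"
    using v(1) by (auto intro!: eq_vecI simp: x_def eh)
  have "M *v x = \<mu> *s x"
  proof -
    have "(M *v x) $ i = \<mu> * x $ i" for i
      using arg_cong[OF jnf_enumeration_mult_mat_vec[OF h, of M x, folded v_eq], of "\<lambda>w. Matrix.vec_index w (e i)"]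
      by (simp add: e v(3)) (simp add: x_def e(1) carrier_vecD[OF v(1)])
    then show ?thesis
      by (simp add: Finite_Cartesian_Product.vec_eq_iff)
  qed
  moreover have "x \<noteq> 0"
    using v(2) v_eq by auto
  ultimately show ?thesis
    by blast
qed

lemma matrix_power_decay:
  fixes M :: "complex^'k^'k"
  assumes ev: "\<And>\<mu> x. x \<noteq> 0 \<Longrightarrow> M *v x = \<mu> *s x \<Longrightarrow> cmod \<mu> < 1"
  shows "\<exists>C s. 0 < s \<and> s < 1 \<and> (\<forall>n x. norm (((*v) M ^^ n) x) \<le> C * s ^ n * norm x)"
proof -
  define N where "N = CARD('k)"
  obtain h where h: "bij_betw h {0..<N} (UNIV :: 'k set)"
    using ex_bij_betw_nat_finite[of "UNIV :: 'k set"] unfolding N_def by auto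
  define A where "A = Matrix.mat N N (\<lambda>(p, q). M $ h p $ h q)"
  define cv where "cv x = Matrix.vec N (\<lambda>p. x $ h p)" for x :: "complex^'k"
  have A: "A \<in> carrier_mat N N" and cv: "cv x \<in> carrier_vec N" for x
    unfolding A_def cv_def by simp_all
  have cv_funpow: "cv (((*v) M ^^ n) x) = (A ^\<^sub>m n) *\<^sub>v cv x" for n x
    by (induction n arbitrary: x)
      (use A cv in \<open>simp_all add: funpow_swap1 assoc_mult_mat_vec[of _ N N _ N]
        jnf_enumeration_mult_mat_vec[OF h, where M = M, folded A_def cv_def]\<close>)
  obtain c s where s: "0 < s" "s < 1"
    and c: "\<And>k p q. p < N \<Longrightarrow> q < N \<Longrightarrow> cmod ((A ^\<^sub>m k) $$ (p, q)) \<le> c * s ^ k"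
    using mat_power_geometric_decay[OF A] jnf_enumeration_eigenvalue[OF h, where M = M, folded A_def] ev by metis
  have "norm (((*v) M ^^ n) x) \<le> real N * (real N * c) * s ^ n * norm x" for n x
  proof -
    have entry: "cmod (((*v) M ^^ n) x $ h p) \<le> real N * c * s ^ n * norm x" if "p < N" for p
    proof -
      have "((*v) M ^^ n) x $ h p = (\<Sum>q<N. (A ^\<^sub>m n) $$ (p, q) * x $ h q)"
        using arg_cong[OF cv_funpow[of n x], of "\<lambda>w. Matrix.vec_index w p"] A that
        by (simp add: cv_def scalar_prod_def Matrix.row_def lessThan_atLeast0)
      also have "cmod \<dots> \<le> (\<Sum>q<N. c * s ^ n * norm x)"
        using c that by (intro order.trans[OF norm_sum sum_mono])
          (auto simp: norm_mult
            intro!: mult_mono Finite_Cartesian_Product.norm_nth_le order.trans[OF norm_ge_zero c])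
      finally show ?thesis
        by simp
    qed
    have "norm (((*v) M ^^ n) x) \<le> (\<Sum>i\<in>UNIV. cmod (((*v) M ^^ n) x $ i))"
      unfolding norm_vec_def by (rule L2_set_le_sum) simp
    also have "\<dots> = (\<Sum>p\<in>{0..<N}. cmod (((*v) M ^^ n) x $ h p))"
      by (rule sum.reindex_bij_betw[OF h, symmetric])
    also have "\<dots> \<le> (\<Sum>p\<in>{0..<N}. real N * c * s ^ n * norm x)"
      by (rule sum_mono) (simp add: entry)
    finally show ?thesis
      by simp
  qed
  then show ?thesis
    using s by blast
qed

definition vectorise :: "'a^'n^'m \<Rightarrow> 'a^('m \<times> 'n)" where
  "vectorise X = (\<chi> p. X $ fst p $ snd p)"

definition unvectorise :: "'a^('m \<times> 'n) \<Rightarrow> 'a^'n^'m" where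
  "unvectorise v = (\<chi> i j. v $ (i, j))"

lemma unvectorise_vectorise [simp]: "unvectorise (vectorise X) = X"
  by (simp add: vectorise_def unvectorise_def Finite_Cartesian_Product.vec_eq_iff)

lemma vectorise_unvectorise [simp]: "vectorise (unvectorise v) = v"
  by (simp add: vectorise_def unvectorise_def Finite_Cartesian_Product.vec_eq_iff)

lemma norm_vectorise: "norm (vectorise (X :: complex^'n^'m)) = norm X"
proof -
  have "(norm X)\<^sup>2 = (\<Sum>i\<in>UNIV. \<Sum>j\<in>UNIV. (cmod (X $ i $ j))\<^sup>2)"
    by (simp add: norm_vec_def L2_set_def sum_nonneg)
  also have "\<dots> = (norm (vectorise X))\<^sup>2"
    by (simp add: norm_vec_def L2_set_def sum_nonneg vectorise_def sum.cartesian_product' flip: UNIV_Times_UNIV)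
  finally show ?thesis
    by (simp add: power2_eq_imp_eq)
qed

lemma matrix_map_power_decay:
  fixes F :: "complex^'n^'n \<Rightarrow> complex^'n^'n"
  assumes add: "\<And>X Y. F (X + Y) = F X + F Y" and hom: "\<And>c X. F (cscale c X) = cscale c (F X)"
    and ev: "\<And>\<mu> X. X \<noteq> 0 \<Longrightarrow> F X = cscale \<mu> X \<Longrightarrow> cmod \<mu> < 1"
  shows "\<exists>C s. 0 < s \<and> s < 1 \<and> (\<forall>n X. norm ((F ^^ n) X) \<le> C * s ^ n * norm X)"
proof -
  define G where "G v = vectorise (F (unvectorise v))" for v
  have cscale_unvectorise: "unvectorise (c *s v) = cscale c (unvectorise v)" for c v
    by (simp add: unvectorise_def cscale_def Finite_Cartesian_Product.vec_eq_iff)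
  have vectorise_linear: "unvectorise (v + w) = unvectorise v + unvectorise w"
    "vectorise (X + Y) = vectorise X + vectorise Y" "vectorise (cscale c X) = c *s vectorise X"
    for v w :: "complex^('n \<times> 'n)" and X Y :: "complex^'n^'n" and c
    by (simp_all add: unvectorise_def vectorise_def cscale_def Finite_Cartesian_Product.vec_eq_iff)
  have "Vector_Spaces.linear (*s) (*s) G"
    unfolding Vector_Spaces.linear_iff
    by (simp add: vec.vector_space_axioms G_def add hom cscale_unvectorise vectorise_linear)
  then have G: "(*v) (matrix G) = G"
    by (simp add: fun_eq_iff matrix_works)
  have "cmod \<mu> < 1" if v: "v \<noteq> 0" "matrix G *v v = \<mu> *s v" for \<mu> v
  proof (rule ev)
    show "unvectorise v \<noteq> 0"
      using v(1) vectorise_unvectorise[of v] by (auto simp: vectorise_def Finite_Cartesian_Product.vec_eq_iff)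
    have "unvectorise (vectorise (F (unvectorise v))) = unvectorise (\<mu> *s v)"
      using v(2) unfolding G G_def by simp
    then show "F (unvectorise v) = cscale \<mu> (unvectorise v)"
      by (simp add: cscale_unvectorise)
  qed
  then obtain C s where s: "0 < s" "s < 1" and decay: "\<And>n v. norm ((G ^^ n) v) \<le> C * s ^ n * norm v"
    using matrix_power_decay[of "matrix G"] unfolding G by blast
  have G_funpow: "(G ^^ n) (vectorise X) = vectorise ((F ^^ n) X)" for n X
    by (induction n) (simp_all add: G_def)
  have "norm ((F ^^ n) X) \<le> C * s ^ n * norm X" for n X
    using decay[of n "vectorise X"] by (simp add: G_funpow norm_vectorise)
  then show ?thesis
    using s by blast
qed

lemma irreducible_channel_deflated_eigenvalue:
  fixes K :: "'m::finite \<Rightarrow> complex^'n^'n"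
  assumes tp: "(\<Sum>m\<in>UNIV. cmat_adj (K m) ** K m) = mat 1"
    and irr: "irreducible_channel (kraus_sum UNIV K K) \<rho>"
    and X: "X \<noteq> 0" "kraus_sum UNIV K K X - cscale (trace X) \<rho> = cscale \<mu> X"
  shows "cmod \<mu> < 1"
proof (cases "\<mu> = 0")
  case False
  have tr_rho: "trace \<rho> = 1" and fixed_iff: "\<And>Y. kraus_sum UNIV K K Y = Y \<longleftrightarrow> (\<exists>c. Y = cscale c \<rho>)"
    using irr unfolding irreducible_channel_def density_matrix_def by auto
  have "\<mu> * trace X = 0"
    using arg_cong[OF X(2), of trace] trace_kraus_sum_funpow[OF tp, of 1]
    by (simp add: trace_sub trace_cscale tr_rho)
  then have "trace X = 0"
    using False by simp
  then have EX: "kraus_sum UNIV K K X = cscale \<mu> X"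
    using X(2) by simp
  have "\<mu> \<noteq> 1"
  proof
    assume "\<mu> = 1"
    then obtain c where "X = cscale c \<rho>"
      using EX fixed_iff by auto
    with \<open>trace X = 0\<close> X(1) show False
      by (simp add: trace_cscale tr_rho)
  qed
  then show ?thesis
    using irr X(1) EX unfolding irreducible_channel_def by blast
qed simp

lemma irreducible_channel_mixing:
  fixes K :: "'m::finite \<Rightarrow> complex^'n^'n"
  assumes tp: "(\<Sum>m\<in>UNIV. cmat_adj (K m) ** K m) = mat 1"
    and irr: "irreducible_channel (kraus_sum UNIV K K) \<rho>"
  shows "\<exists>C s. 0 < s \<and> s < 1 \<and>
           (\<forall>n Y. norm ((kraus_sum UNIV K K ^^ n) Y - cscale (trace Y) \<rho>) \<le> C * s ^ n * norm Y)"
proof -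
  let ?E = "kraus_sum UNIV K K"
  have tr_rho: "trace \<rho> = 1" and fixed_iff: "?E \<rho> = \<rho> \<longleftrightarrow> (\<exists>c. \<rho> = cscale c \<rho>)"
    using irr unfolding irreducible_channel_def density_matrix_def by auto
  have fixed: "?E \<rho> = \<rho>"
    using fixed_iff by (metis cscale_one)
  define F where "F Y = ?E Y - cscale (trace Y) \<rho>" for Y
  obtain C s where s: "0 < s" "s < 1" and decay: "\<And>n Y. norm ((F ^^ n) Y) \<le> C * s ^ n * norm Y"
    using matrix_map_power_decay[of F] irreducible_channel_deflated_eigenvalue[OF tp irr]
    by (auto simp: F_def kraus_sum_add kraus_sum_cscale trace_add trace_cscale cscale_add_scalar cscale_diff
        cscale_cscale)
  \<comment> \<open>\<open>F\<close> agrees with \<open>E\<close> on traceless matrices, and \<open>E ^ n Y - tr Y \<rho> = E ^ n (Y - tr Y \<rho>)\<close>.\<close>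
  have F_funpow: "(F ^^ n) (Y - cscale (trace Y) \<rho>) = (?E ^^ n) Y - cscale (trace Y) \<rho>" for n Y
    by (induction n)
      (simp_all add: F_def kraus_sum_diff kraus_sum_cscale fixed trace_sub trace_cscale tr_rho
        trace_kraus_sum_funpow[OF tp])
  have "linear (\<lambda>Y. Y - cscale (trace Y) \<rho>)"
    by (rule linearI)
      (simp_all add: trace_add cscale_add_scalar scaleR_eq_cscale trace_cscale cscale_diff cscale_cscale)
  then obtain B where B: "\<And>Y. norm (Y - cscale (trace Y) \<rho>) \<le> norm Y * B"
    using bounded_linear.pos_bounded linear_conv_bounded_linear by blast
  have "norm ((?E ^^ n) Y - cscale (trace Y) \<rho>) \<le> (\<bar>C\<bar> * B) * s ^ n * norm Y" for n Y
  proof -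
    have "norm ((?E ^^ n) Y - cscale (trace Y) \<rho>) \<le> C * s ^ n * norm (Y - cscale (trace Y) \<rho>)"
      using decay[of n "Y - cscale (trace Y) \<rho>"] unfolding F_funpow .
    also have "\<dots> \<le> \<bar>C\<bar> * s ^ n * norm (Y - cscale (trace Y) \<rho>)"
      using s by (intro mult_right_mono) auto
    also have "\<dots> \<le> \<bar>C\<bar> * s ^ n * (norm Y * B)"
      using B s by (intro mult_left_mono) auto
    finally show ?thesis
      by (simp add: ac_simps)
  qed
  then show ?thesis
    using s by blast
qed

lemma sum_geometric_le:
  fixes s :: real
  assumes "0 \<le> s" "s < 1"
  shows "(\<Sum>k<t. s ^ k) \<le> 1 / (1 - s)"
proof -
  have "(\<Sum>k<t. s ^ k) = (1 - s ^ t) / (1 - s)"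
    using assms by (simp add: sum_gp_strict)
  also have "\<dots> \<le> 1 / (1 - s)"
    using assms by (intro divide_right_mono) auto
  finally show ?thesis .
qed

lemma norm_sum_le_geometric:
  fixes f :: "nat \<Rightarrow> 'a::real_normed_vector"
  assumes f: "\<And>k. norm (f k) \<le> B * s ^ k" and s: "0 \<le> s" "s < 1"
  shows "norm (\<Sum>k<t. f k) \<le> B / (1 - s)"
proof -
  have B: "0 \<le> B"
    using order.trans[OF norm_ge_zero f[of 0]] by simp
  have "norm (\<Sum>k<t. f k) \<le> B * (\<Sum>k<t. s ^ k)"
    unfolding sum_distrib_left by (rule order.trans[OF norm_sum sum_mono[OF f]])
  also have "\<dots> \<le> B * (1 / (1 - s))"
    using sum_geometric_le[OF s] B by (rule mult_left_mono)
  finally show ?thesis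
    by simp
qed

lemma norm_convolution_sum_le_geometric:
  fixes b :: "nat \<Rightarrow> nat \<Rightarrow> 'a::real_normed_vector"
  assumes b: "\<And>k j. j < k \<Longrightarrow> norm (b k j) \<le> M * (s ^ (k - Suc j) * s ^ j)"
    and M: "0 \<le> M" and s: "0 \<le> s" "s < 1"
  shows "norm (\<Sum>k<t. \<Sum>j<k. b k j) \<le> M / (1 - s)\<^sup>2"
proof -
  have conv: "(\<Sum>k<t. \<Sum>j<k. s ^ (k - Suc j) * s ^ j) \<le> (\<Sum>n<t. s ^ n) * (\<Sum>j<t. s ^ j)"
  proof -
    let ?S = "Sigma {..<t} (\<lambda>k. {..<k})" and ?\<phi> = "\<lambda>(k, j). (k - Suc j, j)"
    have inj: "inj_on ?\<phi> ?S"
      by (auto simp: inj_on_def)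
    have "(\<Sum>k<t. \<Sum>j<k. s ^ (k - Suc j) * s ^ j) = (\<Sum>(k, j)\<in>?S. s ^ (k - Suc j) * s ^ j)"
      by (rule sum.Sigma) auto
    also have "\<dots> = (\<Sum>(n, j)\<in>?\<phi> ` ?S. s ^ n * s ^ j)"
      by (subst sum.reindex[OF inj]) (simp add: case_prod_beta)
    also have "\<dots> \<le> (\<Sum>(n, j)\<in>{..<t} \<times> {..<t}. s ^ n * s ^ j)"
      by (rule sum_mono2) (use s in auto)
    also have "\<dots> = (\<Sum>n<t. s ^ n) * (\<Sum>j<t. s ^ j)"
      by (simp add: sum_product sum.cartesian_product)
    finally show ?thesis .
  qed
  have "norm (\<Sum>k<t. \<Sum>j<k. b k j) \<le> (\<Sum>k<t. \<Sum>j<k. M * (s ^ (k - Suc j) * s ^ j))"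
    by (rule order.trans[OF norm_sum sum_mono], rule order.trans[OF norm_sum sum_mono]) (simp add: b)
  also have "\<dots> \<le> M * ((\<Sum>n<t. s ^ n) * (\<Sum>j<t. s ^ j))"
    using conv M by (simp add: sum_distrib_left[symmetric] mult_left_mono)
  also have "\<dots> \<le> M * (1 / (1 - s) * (1 / (1 - s)))"
    using sum_geometric_le[OF s] M s by (intro mult_left_mono mult_mono) (auto intro: sum_nonneg)
  finally show ?thesis
    by (simp add: power2_eq_square)
qed

lemma norm_sum_partial_sums_minus_linear:
  fixes a :: "nat \<Rightarrow> 'a::{banach,real_normed_algebra_1}"
  assumes a: "\<And>n. norm (a n) \<le> M * s ^ n" and s: "0 \<le> s" "s < 1"
  shows "norm ((\<Sum>k<t. \<Sum>n<k. a n) - of_nat t * suminf a) \<le> M / (1 - s)\<^sup>2"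
proof -
  have "summable (\<lambda>n. M * s ^ n)"
    using s by (simp add: summable_geometric)
  then have summable: "summable a"
    by (rule summable_comparison_test'[where N = 0]) (use a in auto)
  have tail: "norm (\<Sum>n. a (n + k)) \<le> M / (1 - s) * s ^ k" for k
  proof -
    have "norm (a (n + k)) \<le> M * s ^ k * s ^ n" for n
      using a[of "n + k"] by (simp add: power_add ac_simps)
    moreover have "summable (\<lambda>n. M * s ^ k * s ^ n)"
      using s by (intro summable_mult summable_geometric) simp
    ultimately have "norm (\<Sum>n. a (n + k)) \<le> (\<Sum>n. M * s ^ k * s ^ n)"
      by (rule norm_suminf_le)
    also have "\<dots> = M / (1 - s) * s ^ k"
      using s by (simp add: suminf_mult suminf_geometric)
    finally show ?thesis .
  qed
  have "(\<Sum>n<k. a n) = suminf a - (\<Sum>n. a (n + k))" for k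
    by (simp add: suminf_minus_initial_segment[OF summable])
  then have "(\<Sum>k<t. \<Sum>n<k. a n) - of_nat t * suminf a = - (\<Sum>k<t. \<Sum>n. a (n + k))"
    by (simp add: sum_subtractf)
  then have "norm ((\<Sum>k<t. \<Sum>n<k. a n) - of_nat t * suminf a) = norm (\<Sum>k<t. \<Sum>n. a (n + k))"
    by simp
  also have "\<dots> \<le> M / (1 - s) / (1 - s)"
    using tail s by (rule norm_sum_le_geometric)
  finally show ?thesis
    by (simp add: power2_eq_square)
qed

lemma quadratic_le_one_plus_square:
  fixes x :: real
  assumes x: "0 \<le> x"
  shows "a + b * x + (c * x)\<^sup>2 \<le> (\<bar>a\<bar> + \<bar>b\<bar> + c\<^sup>2) * (1 + x)\<^sup>2"
proof -
  have sq: "1 \<le> (1 + x)\<^sup>2" "x \<le> (1 + x)\<^sup>2" "x\<^sup>2 \<le> (1 + x)\<^sup>2"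
    using x by (simp_all add: power2_eq_square algebra_simps)
  have "a \<le> \<bar>a\<bar> * (1 + x)\<^sup>2"
    using mult_left_mono[OF sq(1), of "\<bar>a\<bar>"] by linarith
  moreover have "b * x \<le> \<bar>b\<bar> * (1 + x)\<^sup>2"
    using mult_right_mono[OF abs_ge_self x, of b] mult_left_mono[OF sq(2), of "\<bar>b\<bar>"] by linarith
  moreover have "(c * x)\<^sup>2 \<le> c\<^sup>2 * (1 + x)\<^sup>2"
    using mult_left_mono[OF sq(3), of "c\<^sup>2"] by (simp add: power_mult_distrib)
  ultimately show ?thesis
    by (simp add: algebra_simps)
qed

lemma tendsto_div_of_bounded_deviation:
  fixes f :: "nat \<Rightarrow> real"
  assumes "\<And>t. \<bar>f t - real t * L\<bar> \<le> B"
  shows "(\<lambda>t. f t / real t) \<longlonglongrightarrow> L"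
proof -
  have "(\<lambda>t. f t / real t - L) \<longlonglongrightarrow> 0"
  proof (rule Lim_null_comparison)
    show "\<forall>\<^sub>F t in sequentially. norm (f t / real t - L) \<le> B / real t"
    proof (rule eventually_sequentiallyI[of 1])
      fix t :: nat
      assume "1 \<le> t"
      then have "norm (f t / real t - L) = \<bar>f t - real t * L\<bar> / real t"
        by (simp add: field_simps)
      also have "\<dots> \<le> B / real t"
        using assms[of t] by (simp add: divide_right_mono)
      finally show "norm (f t / real t - L) \<le> B / real t" .
    qed
    show "(\<lambda>t. B / real t) \<longlonglongrightarrow> 0"
      by (rule lim_const_over_n)
  qed
  then show ?thesis
    by (simp add: LIM_zero_iff)
qed

lemma (in prob_space) abs_integral_diff_le:
  fixes f :: "'a \<Rightarrow> real"
  assumes f: "f \<in> borel_measurable M" and bound: "AE x in M. \<bar>f x - c\<bar> \<le> B"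
  shows "\<bar>(\<integral>x. f x \<partial>M) - c\<bar> \<le> B"
proof -
  have "integrable M f"
    using bound by (intro integrable_const_bound[OF _ f, of "\<bar>c\<bar> + B"]) (auto elim!: eventually_mono)
  moreover have "AE x in M. c - B \<le> f x" "AE x in M. f x \<le> c + B"
    using bound by (auto elim!: eventually_mono)
  ultimately show ?thesis
    using integral_ge_const[of f "c - B"] integral_le_const[of f "c + B"] by (simp add: abs_le_iff)
qed

lemma prob_space_haar_state: "prob_space (haar_state :: (complex^'n) measure)"
  and AE_haar_state_norm: "AE \<psi> in (haar_state :: (complex^'n) measure). norm \<psi> = 1"
proof -
  let ?U = "uniform_measure lborel (ball (0 :: complex^'n) 1)"
  have "unit_ball_vol (real (CARD('n)) * 2) \<noteq> 0"
    using unit_ball_vol_pos[of "real (CARD('n)) * 2"] by linarith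
  then have "emeasure lborel (ball (0 :: complex^'n) 1) \<noteq> 0"
    by (simp add: emeasure_ball)
  moreover have "emeasure lborel (ball (0 :: complex^'n) 1) \<noteq> \<infinity>"
    using emeasure_lborel_ball_finite[of "0 :: complex^'n" 1] by simp
  ultimately interpret U: prob_space ?U
    by (rule prob_space_uniform_measure)
  have nrm: "(\<lambda>x. x /\<^sub>R norm x) \<in> measurable ?U borel"
    by measurable
  show "prob_space (haar_state :: (complex^'n) measure)"
    unfolding haar_state_def by (rule U.prob_space_distr[OF nrm])
  have "AE x in ?U. norm (x /\<^sub>R norm x) = 1"
  proof (rule AE_uniform_measureI)
    show "AE x in lborel. x \<in> ball (0 :: complex^'n) 1 \<longrightarrow> norm (x /\<^sub>R norm x) = 1"
      using AE_lborel_singleton[of "0 :: complex^'n"] by eventually_elim simp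
  qed simp
  then show "AE \<psi> in (haar_state :: (complex^'n) measure). norm \<psi> = 1"
    unfolding haar_state_def by (subst AE_distr_iff[OF nrm]) simp_all
qed

lemma tendsto_haar_average:
  fixes f :: "nat \<Rightarrow> complex^'n \<Rightarrow> real"
  assumes meas: "\<And>t. f t \<in> borel_measurable borel"
    and dev: "\<And>t \<psi>. norm \<psi> = 1 \<Longrightarrow> \<bar>f t \<psi> - real t * L\<bar> \<le> B"
  shows "(\<lambda>t. (\<integral>\<psi>. f t \<psi> \<partial>haar_state) / real t) \<longlonglongrightarrow> L"
proof (rule tendsto_div_of_bounded_deviation)
  interpret prob_space "haar_state :: (complex^'n) measure"
    by (rule prob_space_haar_state)
  fix t
  show "\<bar>(\<integral>\<psi>. f t \<psi> \<partial>haar_state) - real t * L\<bar> \<le> B"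
  proof (rule abs_integral_diff_le)
    show "f t \<in> borel_measurable haar_state"
      using meas unfolding haar_state_def by simp
    show "AE \<psi> in haar_state. \<bar>f t \<psi> - real t * L\<bar> \<le> B"
      using AE_haar_state_norm by eventually_elim (rule dev)
  qed
qed

section \<open>Mixing Kraus families\<close>

locale mixing_kraus_family =
  fixes K :: "'m::finite \<Rightarrow> complex^'n::finite^'n" and \<rho> :: "complex^'n^'n" and C s :: real
  assumes trace_preserving: "(\<Sum>m\<in>UNIV. cmat_adj (K m) ** K m) = mat 1"
    and trace_rho: "trace \<rho> = 1" and hermitian_rho: "cmat_adj \<rho> = \<rho>"
    and s: "0 < s" "s < 1"
    and mixing: "\<And>n Y. norm ((kraus_sum UNIV K K ^^ n) Y - cscale (trace Y) \<rho>) \<le> C * s ^ n * norm Y"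
begin

abbreviation E :: "complex^'n^'n \<Rightarrow> complex^'n^'n" where
  "E \<equiv> kraus_sum UNIV K K"

lemma mixing_constant_nonneg: "0 \<le> C"
proof -
  have "0 \<le> C * norm \<rho>"
    using order.trans[OF norm_ge_zero mixing[of 0 \<rho>]] by simp
  moreover have "0 < norm \<rho>"
    using trace_rho by auto
  ultimately show ?thesis
    by (simp add: zero_le_mult_iff)
qed

lemma trace_kraus_sum_funpow_decay:
  "\<exists>B\<ge>0. \<forall>n Y. cmod (trace (kraus_sum UNIV P Q ((E ^^ n) Y)) - trace Y * trace (kraus_sum UNIV P Q \<rho>))
                \<le> B * s ^ n * norm Y"
proof -
  obtain B where B: "\<And>Y. cmod (trace (kraus_sum UNIV P Q Y)) \<le> norm Y * B" "0 < B"
    using bounded_linear.pos_bounded[OF bounded_linear_trace_kraus_sum] by blast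
  have "cmod (trace (kraus_sum UNIV P Q ((E ^^ n) Y)) - trace Y * trace (kraus_sum UNIV P Q \<rho>))
      \<le> (B * C) * s ^ n * norm Y" for n Y
  proof -
    have "cmod (trace (kraus_sum UNIV P Q ((E ^^ n) Y)) - trace Y * trace (kraus_sum UNIV P Q \<rho>))
        = cmod (trace (kraus_sum UNIV P Q ((E ^^ n) Y - cscale (trace Y) \<rho>)))"
      by (simp add: kraus_sum_diff kraus_sum_cscale trace_sub trace_cscale)
    also have "\<dots> \<le> norm ((E ^^ n) Y - cscale (trace Y) \<rho>) * B"
      by (rule B(1))
    also have "\<dots> \<le> C * s ^ n * norm Y * B"
      using B(2) mixing by (intro mult_right_mono) auto
    finally show ?thesis
      by (simp add: ac_simps)
  qed
  then show ?thesis
    using B(2) mixing_constant_nonneg by (intro exI[of _ "B * C"]) simp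
qed

lemma sum_trace_kraus_sum_funpow_linear:
  "\<exists>R. \<forall>t X. trace X = 1 \<longrightarrow>
     cmod ((\<Sum>k<t. trace (kraus_sum UNIV P Q ((E ^^ k) X))) - of_nat t * trace (kraus_sum UNIV P Q \<rho>)) \<le> R * norm X"
proof -
  obtain B where B: "\<And>n Y. cmod (trace (kraus_sum UNIV P Q ((E ^^ n) Y)) - trace Y * trace (kraus_sum UNIV P Q \<rho>))
                \<le> B * s ^ n * norm Y"
    using trace_kraus_sum_funpow_decay by blast
  have "cmod ((\<Sum>k<t. trace (kraus_sum UNIV P Q ((E ^^ k) X))) - of_nat t * trace (kraus_sum UNIV P Q \<rho>))
      \<le> B / (1 - s) * norm X" if "trace X = 1" for t X
  proof -
    have "(\<Sum>k<t. trace (kraus_sum UNIV P Q ((E ^^ k) X))) - of_nat t * trace (kraus_sum UNIV P Q \<rho>)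
        = (\<Sum>k<t. trace (kraus_sum UNIV P Q ((E ^^ k) X)) - trace X * trace (kraus_sum UNIV P Q \<rho>))"
      using that by (simp add: sum_subtractf)
    also have "cmod \<dots> \<le> B * norm X / (1 - s)"
      using B s by (intro norm_sum_le_geometric) (auto simp: ac_simps)
    finally show ?thesis
      by simp
  qed
  then show ?thesis
    by blast
qed

lemma trace_mixed_channel_bounded:
  assumes "trace (kraus_sum UNIV K' K \<rho>) = 0"
  shows "\<exists>R. \<forall>t X. trace X = 1 \<longrightarrow> cmod (trace (mixed_channel K K' t X)) \<le> R * norm X"
  using sum_trace_kraus_sum_funpow_linear[of K' K] by (simp add: trace_mixed_channel[OF trace_preserving] assms)

lemma convolution_remainder_bounded:
  assumes "trace (kraus_sum UNIV P Q \<rho>) = 0"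
  shows "\<exists>R. \<forall>t X. cmod (\<Sum>k<t. \<Sum>j<k. trace (kraus_sum UNIV P Q ((E ^^ (k - Suc j))
           (kraus_sum UNIV P' Q' ((E ^^ j) X - cscale (trace X) \<rho>))))) \<le> R * norm X"
proof -
  obtain B where B: "0 \<le> B" "\<And>n Y. cmod (trace (kraus_sum UNIV P Q ((E ^^ n) Y))) \<le> B * s ^ n * norm Y"
    using trace_kraus_sum_funpow_decay[of P Q] assms by auto
  obtain B' where B': "\<And>Y. norm (kraus_sum UNIV P' Q' Y) \<le> norm Y * B'" "0 < B'"
    using bounded_linear.pos_bounded[OF bounded_linear_kraus_sum] by blast
  have "cmod (trace (kraus_sum UNIV P Q ((E ^^ n) (kraus_sum UNIV P' Q' ((E ^^ j) X - cscale (trace X) \<rho>)))))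
      \<le> (B * B' * C * norm X) * (s ^ n * s ^ j)" for n j X
  proof -
    have "norm (kraus_sum UNIV P' Q' ((E ^^ j) X - cscale (trace X) \<rho>)) \<le> C * s ^ j * norm X * B'"
      using B' mixing[of j X] by (meson less_imp_le mult_right_mono order_trans)
    then have "B * s ^ n * norm (kraus_sum UNIV P' Q' ((E ^^ j) X - cscale (trace X) \<rho>))
        \<le> B * s ^ n * (C * s ^ j * norm X * B')"
      using B(1) s by (intro mult_left_mono) auto
    also have "\<dots> = (B * B' * C * norm X) * (s ^ n * s ^ j)"
      by (simp add: ac_simps)
    finally show ?thesis
      using B(2)[of n] by (rule order.trans[rotated])
  qed
  then have "cmod (\<Sum>k<t. \<Sum>j<k. trace (kraus_sum UNIV P Q ((E ^^ (k - Suc j))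
           (kraus_sum UNIV P' Q' ((E ^^ j) X - cscale (trace X) \<rho>))))) \<le> B * B' * C / (1 - s)\<^sup>2 * norm X" for t X
    using B(1) B'(2) mixing_constant_nonneg s
    by (intro order.trans[OF norm_convolution_sum_le_geometric[where M = "B * B' * C * norm X"]]) auto
  then show ?thesis
    by blast
qed

lemma sum_trace_mixed_channel_linear:
  assumes g: "trace (kraus_sum UNIV K' K \<rho>) = 0"
  shows "\<exists>c R0 R1. \<forall>t X. trace X = 1 \<longrightarrow>
           cmod ((\<Sum>k<t. trace (kraus_sum UNIV K K' (mixed_channel K K' k X))) - of_nat t * c) \<le> R0 + R1 * norm X"
proof -
  let ?tr = "\<lambda>Y. trace (kraus_sum UNIV K K' Y)"
  have g': "?tr \<rho> = 0"
    using g hermitian_rho by (metis cmat_adj_kraus_sum complex_cnj_zero trace_cmat_adj)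
  define W where "W = kraus_sum UNIV K' K \<rho>"
  define a where "a n = ?tr ((E ^^ n) W)" for n
  obtain B where B: "\<And>n Y. cmod (?tr ((E ^^ n) Y)) \<le> B * s ^ n * norm Y"
    using trace_kraus_sum_funpow_decay[of K K'] g' by auto
  obtain R where R: "\<And>t X. cmod (\<Sum>k<t. \<Sum>j<k. ?tr ((E ^^ (k - Suc j))
           (kraus_sum UNIV K' K ((E ^^ j) X - cscale (trace X) \<rho>)))) \<le> R * norm X"
    using convolution_remainder_bounded[OF g', of K' K] by blast
  \<comment> \<open>The \<open>\<rho>\<close>-part of \<open>E\<^sup>j X\<close> yields partial sums of \<open>a\<close>, the rest a geometric convolution.\<close>
  have split: "?tr (mixed_channel K K' k X) = (\<Sum>n<k. a n)
      + (\<Sum>j<k. ?tr ((E ^^ (k - Suc j)) (kraus_sum UNIV K' K ((E ^^ j) X - cscale (trace X) \<rho>))))"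
    if "trace X = 1" for k X
  proof -
    have "kraus_sum UNIV K' K ((E ^^ j) X) = W + kraus_sum UNIV K' K ((E ^^ j) X - cscale (trace X) \<rho>)" for j
      using that by (simp add: W_def kraus_sum_diff)
    then have "?tr (mixed_channel K K' k X) = (\<Sum>j<k. a (k - Suc j))
        + (\<Sum>j<k. ?tr ((E ^^ (k - Suc j)) (kraus_sum UNIV K' K ((E ^^ j) X - cscale (trace X) \<rho>))))"
      by (simp add: mixed_channel_eq_sum kraus_sum_sum trace_sum kraus_sum_funpow_add kraus_sum_add trace_add
          sum.distrib a_def)
    then show ?thesis
      by (simp only: sum.nat_diff_reindex)
  qed
  have "cmod ((\<Sum>k<t. ?tr (mixed_channel K K' k X)) - of_nat t * suminf a) \<le> B * norm W / (1 - s)\<^sup>2 + R * norm X"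
    if "trace X = 1" for t X
  proof -
    have "(\<Sum>k<t. ?tr (mixed_channel K K' k X)) - of_nat t * suminf a = ((\<Sum>k<t. \<Sum>n<k. a n) - of_nat t * suminf a)
        + (\<Sum>k<t. \<Sum>j<k. ?tr ((E ^^ (k - Suc j)) (kraus_sum UNIV K' K ((E ^^ j) X - cscale (trace X) \<rho>))))"
      by (simp add: split[OF that] sum.distrib)
    also have "cmod \<dots> \<le> B * norm W / (1 - s)\<^sup>2 + R * norm X"
      using norm_sum_partial_sums_minus_linear[of a "B * norm W" s t] B s R unfolding a_def
      by (intro order.trans[OF norm_triangle_ineq add_mono]) (auto simp: ac_simps)
    finally show ?thesis .
  qed
  then show ?thesis
    by blast
qed

lemma re_trace_deriv_channel_linear:
  assumes g: "trace (kraus_sum UNIV K' K \<rho>) = 0"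
  shows "\<exists>L R0 R1. \<forall>t X. cmat_adj X = X \<longrightarrow> trace X = 1 \<longrightarrow>
           \<bar>Re (trace (deriv_channel K K' t X)) - real t * L\<bar> \<le> R0 + R1 * norm X"
proof -
  obtain R where R: "\<And>t X. trace X = 1 \<Longrightarrow> cmod ((\<Sum>k<t. trace (kraus_sum UNIV K' K' ((E ^^ k) X)))
      - of_nat t * trace (kraus_sum UNIV K' K' \<rho>)) \<le> R * norm X"
    using sum_trace_kraus_sum_funpow_linear[of K' K'] by blast
  obtain c R0 R1 where c: "\<And>t X. trace X = 1 \<Longrightarrow>
      cmod ((\<Sum>k<t. trace (kraus_sum UNIV K K' (mixed_channel K K' k X))) - of_nat t * c) \<le> R0 + R1 * norm X"
    using sum_trace_mixed_channel_linear[OF g] by blast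
  define L where "L = Re (trace (kraus_sum UNIV K' K' \<rho>)) + 2 * Re c"
  have "\<bar>Re (trace (deriv_channel K K' t X)) - real t * L\<bar> \<le> 2 * R0 + (R + 2 * R1) * norm X"
    if herm: "cmat_adj X = X" and tr: "trace X = 1" for t X
  proof -
    let ?a = "(\<Sum>k<t. trace (kraus_sum UNIV K' K' ((E ^^ k) X))) - of_nat t * trace (kraus_sum UNIV K' K' \<rho>)"
    let ?b = "(\<Sum>k<t. trace (kraus_sum UNIV K K' (mixed_channel K K' k X))) - of_nat t * c"
    have eq: "Re (trace (deriv_channel K K' t X)) - real t * L = Re ?a + 2 * Re ?b"
      by (simp add: re_trace_deriv_channel[OF trace_preserving herm] L_def sum.distrib sum_distrib_left
          algebra_simps)
    have abs_le: "\<bar>Re a + 2 * Re b\<bar> \<le> cmod a + 2 * cmod b" for a b :: complex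
      using abs_Re_le_cmod[of a] abs_Re_le_cmod[of b] abs_triangle_ineq[of "Re a" "2 * Re b"]
      by (simp add: abs_mult)
    have "\<bar>Re (trace (deriv_channel K K' t X)) - real t * L\<bar> \<le> cmod ?a + 2 * cmod ?b"
      unfolding eq by (rule abs_le)
    also have "\<dots> \<le> R * norm X + 2 * (R0 + R1 * norm X)"
      by (rule add_mono[OF R[OF tr] mult_left_mono[OF c[OF tr]]]) simp
    also have "\<dots> = 2 * R0 + (R + 2 * R1) * norm X"
      by (simp add: algebra_simps)
    finally show ?thesis .
  qed
  then show ?thesis
    by blast
qed

lemma emission_qfi_linear_growth:
  "\<exists>L R. \<forall>t X. cmat_adj X = X \<longrightarrow> trace X = 1 \<longrightarrow>
     \<bar>emission_qfi K K' t X - real t * L\<bar> \<le> R * (1 + norm X)\<^sup>2"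
proof -
  \<comment> \<open>This gauge leaves the QFI unchanged and makes \<open>tr N\<^sub>t\<close> bounded, cancelling the \<open>t\<^sup>2\<close> terms.\<close>
  define K'' where "K'' = (\<lambda>m. K' m - cscale (trace (kraus_sum UNIV K' K \<rho>)) (K m))"
  have g: "trace (kraus_sum UNIV K'' K \<rho>) = 0"
    using trace_kraus_sum_funpow[OF trace_preserving, of 1 \<rho>]
    by (simp add: K''_def kraus_sum_diff_left trace_sub trace_cscale trace_rho)
  obtain L R0 R1 where L: "\<And>t X. cmat_adj X = X \<Longrightarrow> trace X = 1 \<Longrightarrow>
      \<bar>Re (trace (deriv_channel K K'' t X)) - real t * L\<bar> \<le> R0 + R1 * norm X"
    using re_trace_deriv_channel_linear[OF g] by blast
  obtain B where B: "\<And>t X. trace X = 1 \<Longrightarrow> cmod (trace (mixed_channel K K'' t X)) \<le> B * norm X"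
    using trace_mixed_channel_bounded[OF g] by blast
  define R where "R = 4 * (\<bar>R0\<bar> + \<bar>R1\<bar> + B\<^sup>2)"
  have "\<bar>emission_qfi K K' t X - real t * (4 * L)\<bar> \<le> R * (1 + norm X)\<^sup>2"
    if herm: "cmat_adj X = X" and tr: "trace X = 1" for t X
  proof -
    let ?x = "norm X"
    let ?d = "Re (trace (deriv_channel K K'' t X)) - real t * L" and ?m = "cmod (trace (mixed_channel K K'' t X))"
    have "emission_qfi K K' t X = emission_qfi K K'' t X"
      unfolding K''_def by (rule emission_qfi_gauge[OF trace_preserving herm tr, symmetric])
    then have eq: "emission_qfi K K' t X - real t * (4 * L) = 4 * (?d - ?m\<^sup>2)"
      by (simp add: emission_qfi_def algebra_simps)
    have "\<bar>emission_qfi K K' t X - real t * (4 * L)\<bar> \<le> 4 * (\<bar>?d\<bar> + ?m\<^sup>2)"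
      unfolding eq abs_mult using abs_triangle_ineq4[of ?d "?m\<^sup>2"] by simp
    also have "\<dots> \<le> 4 * (R0 + R1 * ?x + (B * ?x)\<^sup>2)"
      using L[OF herm tr, of t] B[OF tr, of t] by (intro mult_left_mono add_mono power_mono) auto
    also have "\<dots> \<le> 4 * ((\<bar>R0\<bar> + \<bar>R1\<bar> + B\<^sup>2) * (1 + ?x)\<^sup>2)"
      using quadratic_le_one_plus_square[OF norm_ge_zero[of X], of R0 R1 B] by (rule mult_left_mono) simp
    finally show ?thesis
      unfolding R_def by (simp only: mult.assoc)
  qed
  then show ?thesis
    by blast
qed

end

theorem corollary1:
  fixes K :: "real \<Rightarrow> 'm::finite \<Rightarrow> complex^'n::finite^'n"
    and \<theta>0 :: real
    and \<rho>ss \<xi> :: "complex^'n^'n"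
  assumes diff: "\<And>m \<theta>. (\<lambda>s. K s m) differentiable (at \<theta>)"
    and tp: "\<And>\<theta>. (\<Sum>m\<in>UNIV. cmat_adj (K \<theta> m) ** K \<theta> m) = mat 1"
    and irr: "irreducible_channel (kraus_channel K \<theta>0) \<rho>ss"
    and pur: "purifies \<xi> \<rho>ss"
  shows "\<exists>L::real. (\<lambda>t. avg_F_SE K \<theta>0 t / real t) \<longlonglongrightarrow> L
                 \<and> (\<lambda>t. F_E K \<xi> \<theta>0 t / real t) \<longlonglongrightarrow> L"
proof -
  define K' where "K' m = vector_derivative (\<lambda>s. K s m) (at \<theta>0)" for m
  have deriv: "\<And>m. ((\<lambda>s. K s m) has_vector_derivative K' m) (at \<theta>0)"
    unfolding K'_def using diff vector_derivative_works by blast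
  have herm: "cmat_adj \<rho>ss = \<rho>ss" and tr: "trace \<rho>ss = 1"
    using irr unfolding irreducible_channel_def density_matrix_def by auto
  obtain C s where "0 < s" "s < 1"
    and "\<And>n Y. norm ((kraus_sum UNIV (K \<theta>0) (K \<theta>0) ^^ n) Y - cscale (trace Y) \<rho>ss) \<le> C * s ^ n * norm Y"
    using irreducible_channel_mixing[OF tp irr[unfolded kraus_channel_eq]] by blast
  then interpret mixing_kraus_family "K \<theta>0" \<rho>ss C s
    using tp herm tr by unfold_locales auto
  obtain L R where growth: "\<And>t X. cmat_adj X = X \<Longrightarrow> trace X = 1 \<Longrightarrow>
      \<bar>emission_qfi (K \<theta>0) K' t X - real t * L\<bar> \<le> R * (1 + norm X)\<^sup>2"
    using emission_qfi_linear_growth by blast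
  have "(\<lambda>t. F_E K \<xi> \<theta>0 t / real t) \<longlonglongrightarrow> L"
    using growth[OF herm tr]
    by (intro tendsto_div_of_bounded_deviation) (simp add: F_E_eq_emission_qfi[OF deriv pur])
  moreover have "(\<lambda>t. avg_F_SE K \<theta>0 t / real t) \<longlonglongrightarrow> L"
    unfolding avg_F_SE_def F_SE_eq_emission_qfi[OF deriv]
  proof (rule tendsto_haar_average[where B = "R * 2\<^sup>2"])
    show "(\<lambda>\<psi>. emission_qfi (K \<theta>0) K' t (dyad \<psi>)) \<in> borel_measurable borel" for t
      by (rule borel_measurable_continuous_onI[OF continuous_on_emission_qfi_dyad])
    show "\<bar>emission_qfi (K \<theta>0) K' t (dyad \<psi>) - real t * L\<bar> \<le> R * 2\<^sup>2" if "norm \<psi> = 1" for t \<psi>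
      using growth[OF cmat_adj_dyad, of \<psi> t] that by (simp add: trace_dyad norm_dyad)
  qed
  ultimately show ?thesis
    by blast
qed

end
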